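(* Under the standing assumptions below, $c_*(0)>2\sqrt{p-1}$, $c_*(1)>\sqrt{\ln p}$, and $$c_*(h)>2\sqrt{\frac{p-1}{p(2h+h^2)+1}}\qquad\text{for all } h\ge0 .$$
   Context: Let $K:\mathbb R\to[0,\infty)$ be measurable with $K(s)=K(-s)$ for all $s\in\mathbb R$, $\int_{\mathbb R}K(s)\,ds=1$, and $\int_{\mathbb R}K(s)e^{\lambda s}ds<\infty$ for every $\lambda\in\mathbb R$. Fix $p>1$. For $h\ge0$, $z\in\mathbb R$, $\varepsilon>0$ set $$\psi_h(z,\varepsilon)=\varepsilon z^2-z-1+p\,e^{-zh}\int_{\mathbb R}K(s)e^{-\sqrt{\varepsilon}\,zs}\,ds .$$ Standing fact (known, assumed): for every $h\ge0$ there is exactly one pair $(z_0(h),\varepsilon_0(h))$ with $z_0(h)>0$, $\varepsilon_0(h)>0$ satisfying $\psi_h(z_0,\varepsilon_0)=0$ and $\partial_z\psi_h(z_0,\varepsilon_0)=0$; moreover $\varepsilon_0(h)$ is the largest $\varepsilon>0$ for which $\psi_h(\cdot,\varepsilon)$ has a positive zero, and $\psi_h(z,\varepsilon)>0$ for all $z>0$ whenever $\varepsilon>\varepsilon_0(h)$. Define $c_*(h)=1/\sqrt{\varepsilon_0(h)}$. *)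

theory Defs
  imports "HOL-Analysis.Analysis"
begin

definition psi :: "(real \<Rightarrow> real) \<Rightarrow> real \<Rightarrow> real \<Rightarrow> real \<Rightarrow> real \<Rightarrow> real" where
  "psi K p h z \<epsilon> = \<epsilon> * z\<^sup>2 - z - 1 + p * exp (- z * h) *
      (\<integral>s. K s * exp (- sqrt \<epsilon> * z * s) \<partial>lborel)"

definition c_star :: "(real \<Rightarrow> real) \<Rightarrow> real \<Rightarrow> real" where
  "c_star \<epsilon>0 h = 1 / sqrt (\<epsilon>0 h)"

end

theory Submission
  imports Defs
begin

text \<open>
  Write Phi(h,z,eps) = eps z^2 - z - 1 + p e^(-zh) for the symbol psi with the
  kernel K replaced by a point mass at 0.  Since K is a symmetric probability density with
  exponential moments, strict Jensen gives  \<integral> K(s) e^(-lam s) ds > 1  for every lam \<noteq> 0,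
  so psi > Phi at every z > 0, eps > 0; in particular Phi(h, z0(h), eps0(h)) < 0.
  Phi is increasing in eps for z > 0, hence any coefficient A with Phi(h, z, A) \<ge> 0 for all
  z > 0 satisfies eps0(h) < A, i.e. c_*(h) > 1/sqrt A.
\<close>

text \<open>Exponential moments control the first moment, since |s| \<le> e^s + e^(-s).\<close>

lemma kernel_first_moment_integrable:
  fixes K :: "real \<Rightarrow> real"
  assumes K_nonneg: "\<And>s. K s \<ge> 0"
    and K_exp: "\<And>l::real. integrable lborel (\<lambda>s. K s * exp (l * s))"
  shows "integrable lborel (\<lambda>s. K s * s)"
proof (rule Bochner_Integration.integrable_bound)
  show "integrable lborel (\<lambda>s. K s * exp (1 * s) + K s * exp (-1 * s))"
    using K_exp[of 1] K_exp[of "-1"] by (rule Bochner_Integration.integrable_add)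
  have "integrable lborel K" using K_exp[of 0] by simp
  then have [measurable]: "K \<in> borel_measurable lborel" by (rule borel_measurable_integrable)
  show "(\<lambda>s. K s * s) \<in> borel_measurable lborel" by measurable
  show "AE s in lborel. norm (K s * s) \<le> norm (K s * exp (1 * s) + K s * exp (-1 * s))"
  proof (intro AE_I2)
    fix s :: real
    have "\<bar>s\<bar> \<le> exp s + exp (-s)"
      using exp_gt_self[of s] exp_gt_self[of "-s"] exp_gt_zero[of s] exp_gt_zero[of "-s"]
      by linarith
    then have "K s * \<bar>s\<bar> \<le> K s * (exp s + exp (-s))"
      using K_nonneg[of s] by (rule mult_left_mono)
    then show "norm (K s * s) \<le> norm (K s * exp (1 * s) + K s * exp (-1 * s))"
      using K_nonneg[of s] by (simp add: abs_mult algebra_simps)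
  qed
qed

text \<open>A symmetric kernel has vanishing first moment (reflect s to -s).\<close>

lemma kernel_first_moment_zero:
  fixes K :: "real \<Rightarrow> real"
  assumes K_sym: "\<And>s. K s = K (- s)"
  shows "(\<integral>s. K s * s \<partial>lborel) = 0"
proof -
  have "(\<integral>s. K s * s \<partial>lborel) = \<bar>-1::real\<bar> *\<^sub>R (\<integral>x. K (0 + -1 * x) * (0 + -1 * x) \<partial>lborel)"
    by (rule lborel_integral_real_affine) simp
  also have "(\<lambda>x. K (0 + -1 * x) * (0 + -1 * x)) = (\<lambda>x. - (K x * x))"
    using K_sym by (auto intro!: ext)
  finally show ?thesis by simp
qed

text \<open>
  Strict Jensen inequality for the exponential: for a symmetric probability density K with
  exponential moments, \<integral> K(s) e^(-lam s) ds > 1 whenever lam \<noteq> 0.  The integrand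
  K(s) (e^(-lam s) - 1 + lam s) is nonnegative, integrates to the Laplace transform minus one,
  and can only have integral zero if K vanishes almost everywhere.
\<close>

lemma kernel_laplace_gt_one:
  fixes K :: "real \<Rightarrow> real" and lam :: real
  assumes K_nonneg: "\<And>s. K s \<ge> 0"
    and K_sym: "\<And>s. K s = K (- s)"
    and K_mass: "(\<integral>s. K s \<partial>lborel) = 1"
    and K_exp: "\<And>l::real. integrable lborel (\<lambda>s. K s * exp (l * s))"
    and lam: "lam \<noteq> 0"
  shows "(\<integral>s. K s * exp (- lam * s) \<partial>lborel) > 1"
proof -
  define f where "f s = K s * exp (- lam * s) - K s + lam * (K s * s)" for s
  have int_laplace: "integrable lborel (\<lambda>s. K s * exp (- lam * s))" using K_exp[of "- lam"] .
  have int_K: "integrable lborel K" using K_exp[of 0] by simp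
  have int_moment: "integrable lborel (\<lambda>s. lam * (K s * s))"
    using kernel_first_moment_integrable[OF K_nonneg K_exp] by (rule integrable_mult_right)
  have int_f: "integrable lborel f"
    unfolding f_def using int_laplace int_K int_moment by auto
  have integral_f: "(\<integral>s. f s \<partial>lborel) = (\<integral>s. K s * exp (- lam * s) \<partial>lborel) - 1"
    using int_laplace int_K int_moment kernel_first_moment_zero[of K, OF K_sym] K_mass
    unfolding f_def by (simp add: Bochner_Integration.integral_add Bochner_Integration.integral_diff)
  have f_eq: "f s = K s * (exp (- (lam * s)) - (1 - lam * s))" for s
    unfolding f_def by (simp add: algebra_simps)
  have f_nonneg: "f s \<ge> 0" for s
    using exp_minus_ge[of "lam * s"] K_nonneg[of s] unfolding f_eq by simp
  have "(\<integral>s. f s \<partial>lborel) \<noteq> 0"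
  proof
    assume "(\<integral>s. f s \<partial>lborel) = 0"
    then have "AE s in lborel. f s = 0"
      using integral_nonneg_eq_0_iff_AE[OF int_f] f_nonneg by auto
    then have "AE s in lborel. K s = 0"
      using AE_lborel_singleton[of "0::real"]
    proof eventually_elim
      case (elim s)
      then have "exp (- (lam * s)) - (1 - lam * s) > 0"
        using exp_minus_greater[of "lam * s"] lam by simp
      then show ?case using elim(1) unfolding f_eq by simp
    qed
    then have "(\<integral>s. K s \<partial>lborel) = 0" by (rule integral_eq_zero_AE)
    then show False using K_mass by simp
  qed
  moreover have "(\<integral>s. f s \<partial>lborel) \<ge> 0"
    using f_nonneg by (simp add: Bochner_Integration.integral_nonneg)
  ultimately show ?thesis using integral_f by linarith
qed

text \<open>The symbol psi with the kernel replaced by the point mass at 0.\<close>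

definition psi_point :: "real \<Rightarrow> real \<Rightarrow> real \<Rightarrow> real \<Rightarrow> real" where
  "psi_point p h z \<epsilon> = \<epsilon> * z\<^sup>2 - z - 1 + p * exp (- z * h)"

lemma psi_gt_psi_point:
  fixes K :: "real \<Rightarrow> real"
  assumes K_nonneg: "\<And>s. K s \<ge> 0"
    and K_sym: "\<And>s. K s = K (- s)"
    and K_mass: "(\<integral>s. K s \<partial>lborel) = 1"
    and K_exp: "\<And>l::real. integrable lborel (\<lambda>s. K s * exp (l * s))"
    and p: "p > 0" and z: "z > 0" and \<epsilon>: "\<epsilon> > 0"
  shows "psi K p h z \<epsilon> > psi_point p h z \<epsilon>"
proof -
  have "sqrt \<epsilon> * z \<noteq> 0" using z \<epsilon> by simp
  from kernel_laplace_gt_one[OF K_nonneg K_sym K_mass K_exp this]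
  have "1 < (\<integral>s. K s * exp (- sqrt \<epsilon> * z * s) \<partial>lborel)" by simp
  moreover have "p * exp (- z * h) > 0" using p by simp
  ultimately have "p * exp (- z * h) * 1 < p * exp (- z * h) * (\<integral>s. K s * exp (- sqrt \<epsilon> * z * s) \<partial>lborel)"
    by (rule mult_strict_left_mono)
  then show ?thesis unfolding psi_def psi_point_def by linarith
qed

text \<open>
  Consequently, at a zero (z, eps) of psi with z > 0 the kernel-free symbol is negative, so
  any coefficient A making it nonnegative at z lies strictly above eps.
\<close>

lemma zero_of_psi_below_coefficient:
  fixes K :: "real \<Rightarrow> real"
  assumes K_nonneg: "\<And>s. K s \<ge> 0"
    and K_sym: "\<And>s. K s = K (- s)"
    and K_mass: "(\<integral>s. K s \<partial>lborel) = 1"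
    and K_exp: "\<And>l::real. integrable lborel (\<lambda>s. K s * exp (l * s))"
    and p: "p > 0" and z: "z > 0" and \<epsilon>: "\<epsilon> > 0"
    and zero: "psi K p h z \<epsilon> = 0"
    and A: "psi_point p h z A \<ge> 0"
  shows "\<epsilon> < A"
proof -
  have "psi_point p h z \<epsilon> < psi_point p h z A"
    using psi_gt_psi_point[where h = h, OF K_nonneg K_sym K_mass K_exp p z \<epsilon>] zero A by linarith
  then have "\<epsilon> * z\<^sup>2 < A * z\<^sup>2" unfolding psi_point_def by linarith
  then show ?thesis using z by simp
qed

text \<open>
  With a = e^(-zh/2) and
  b = (1+h) z/2 one has a + b \<ge> 1 + z/2, and the symbol equals
  p a^2 + p b^2/(p-1) - (1 + z/2)^2 \<ge> (a+b)^2 - (1+z/2)^2 by Cauchy-Schwarz.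
\<close>

lemma psi_point_nonneg:
  fixes p h z :: real
  assumes p: "p > 1" and h: "h \<ge> 0" and z: "z \<ge> 0"
  shows "psi_point p h z ((p * (2 * h + h\<^sup>2) + 1) / (4 * (p - 1))) \<ge> 0"
proof -
  define a where "a = exp (- (z * h / 2))"
  define b where "b = (1 + h) * (z / 2)"
  have a_sq: "a\<^sup>2 = exp (- z * h)" unfolding a_def
    by (simp add: power2_eq_square exp_add[symmetric])
  have "a \<ge> 1 - z * h / 2" unfolding a_def by (rule exp_minus_ge)
  moreover have "b = z / 2 + z * h / 2" unfolding b_def by (simp add: algebra_simps)
  ultimately have "a + b \<ge> 1 + z / 2" by linarith
  then have tangent: "(a + b)\<^sup>2 \<ge> (1 + z / 2)\<^sup>2" using z by (simp add: power_mono)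
  have cauchy_schwarz: "p * a\<^sup>2 + p * b\<^sup>2 / (p - 1) - (a + b)\<^sup>2 = ((p - 1) * a - b)\<^sup>2 / (p - 1)"
    using p by (simp add: field_simps power2_eq_square)
  have "((p - 1) * a - b)\<^sup>2 / (p - 1) \<ge> 0" using p by simp
  moreover have "psi_point p h z ((p * (2 * h + h\<^sup>2) + 1) / (4 * (p - 1)))
      = p * a\<^sup>2 + p * b\<^sup>2 / (p - 1) - (1 + z / 2)\<^sup>2"
    unfolding psi_point_def a_sq[symmetric] b_def using p
    by (simp add: field_simps power2_eq_square)
  ultimately show ?thesis using cauchy_schwarz tangent by linarith
qed

text \<open>
  For h = 1 the coefficient 1/ln p works: p e^(-z) = e^(ln p - z) \<ge> 1 + ln p - z, and
  z^2/ln p - 2z + ln p = (z - ln p)^2/ln p \<ge> 0.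
\<close>

lemma psi_point_nonneg_unit_delay:
  fixes p z :: real
  assumes p: "p > 1"
  shows "psi_point p 1 z (1 / ln p) \<ge> 0"
proof -
  define L where "L = ln p"
  have L: "L > 0" unfolding L_def using p by simp
  have "p * exp (- z * 1) = exp (L - z)"
    unfolding L_def using p by (simp add: exp_diff exp_minus field_simps)
  moreover have "1 + (L - z) \<le> exp (L - z)" by (rule exp_ge_add_one_self)
  ultimately have tangent: "p * exp (- z * 1) \<ge> 1 + L - z" by linarith
  have "z\<^sup>2 / L - 2 * z + L = (z - L)\<^sup>2 / L" using L by (simp add: field_simps power2_eq_square)
  moreover have "(z - L)\<^sup>2 / L \<ge> 0" using L by simp
  ultimately show ?thesis using tangent unfolding psi_point_def L_def[symmetric] by simp
qed

lemma inv_sqrt_strict_antimono: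
  fixes \<epsilon> A :: real
  assumes "0 < \<epsilon>" "\<epsilon> < A"
  shows "1 / sqrt A < 1 / sqrt \<epsilon>"
  using assms by (simp add: divide_strict_left_mono)

theorem mainTheorem4:
  fixes K :: "real \<Rightarrow> real" and p :: real
    and z0 \<epsilon>0 :: "real \<Rightarrow> real"
  assumes K_meas: "K \<in> borel_measurable borel"
    and K_nonneg: "\<And>s. K s \<ge> 0"
    and K_sym: "\<And>s. K s = K (- s)"
    and K_int: "integrable lborel K"
    and K_mass: "(\<integral>s. K s \<partial>lborel) = 1"
    and K_exp: "\<And>l::real. integrable lborel (\<lambda>s. K s * exp (l * s))"
    and p_gt: "p > 1"
    and z0_pos: "\<And>h. h \<ge> 0 \<Longrightarrow> z0 h > 0"
    and eps0_pos: "\<And>h. h \<ge> 0 \<Longrightarrow> \<epsilon>0 h > 0"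
    and touch: "\<And>h. h \<ge> 0 \<Longrightarrow> psi K p h (z0 h) (\<epsilon>0 h) = 0"
    and touch_deriv: "\<And>h. h \<ge> 0 \<Longrightarrow>
        ((\<lambda>z. psi K p h z (\<epsilon>0 h)) has_real_derivative 0) (at (z0 h))"
    and touch_unique: "\<And>h z \<epsilon>. h \<ge> 0 \<Longrightarrow> z > 0 \<Longrightarrow> \<epsilon> > 0 \<Longrightarrow>
        psi K p h z \<epsilon> = 0 \<Longrightarrow>
        ((\<lambda>w. psi K p h w \<epsilon>) has_real_derivative 0) (at z) \<Longrightarrow>
        z = z0 h \<and> \<epsilon> = \<epsilon>0 h"
    and eps0_max: "\<And>h z \<epsilon>. h \<ge> 0 \<Longrightarrow> z > 0 \<Longrightarrow> \<epsilon> > 0 \<Longrightarrow>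
        psi K p h z \<epsilon> = 0 \<Longrightarrow> \<epsilon> \<le> \<epsilon>0 h"
    and above_pos: "\<And>h z \<epsilon>. h \<ge> 0 \<Longrightarrow> \<epsilon> > \<epsilon>0 h \<Longrightarrow> z > 0 \<Longrightarrow>
        psi K p h z \<epsilon> > 0"
  shows "c_star \<epsilon>0 0 > 2 * sqrt (p - 1)
    \<and> c_star \<epsilon>0 1 > sqrt (ln p)
    \<and> (\<forall>h\<ge>0. c_star \<epsilon>0 h > 2 * sqrt ((p - 1) / (p * (2 * h + h\<^sup>2) + 1)))"
proof -
  have speed_bound: "c_star \<epsilon>0 h > 1 / sqrt A"
    if h: "h \<ge> 0" and A: "psi_point p h (z0 h) A \<ge> 0" for h A
    using zero_of_psi_below_coefficient[OF K_nonneg K_sym K_mass K_exp _ z0_pos[OF h]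
        eps0_pos[OF h] touch[OF h] A] p_gt eps0_pos[OF h]
    unfolding c_star_def by (simp add: inv_sqrt_strict_antimono)
  have general: "c_star \<epsilon>0 h > 2 * sqrt ((p - 1) / (p * (2 * h + h\<^sup>2) + 1))" if h: "h \<ge> 0" for h
  proof -
    have "1 / sqrt ((p * (2 * h + h\<^sup>2) + 1) / (4 * (p - 1)))
        = sqrt 4 * sqrt ((p - 1) / (p * (2 * h + h\<^sup>2) + 1))"
      by (simp only: real_sqrt_divide real_sqrt_mult) simp
    then have "1 / sqrt ((p * (2 * h + h\<^sup>2) + 1) / (4 * (p - 1)))
        = 2 * sqrt ((p - 1) / (p * (2 * h + h\<^sup>2) + 1))"
      by simp
    then show ?thesis
      using speed_bound[OF h psi_point_nonneg[OF p_gt h less_imp_le[OF z0_pos[OF h]]]] by simp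
  qed
  have "c_star \<epsilon>0 1 > sqrt (ln p)"
    using speed_bound[of 1, OF _ psi_point_nonneg_unit_delay[OF p_gt]]
    by (simp add: real_sqrt_divide)
  moreover have "c_star \<epsilon>0 0 > 2 * sqrt (p - 1)" using general[of 0] by simp
  ultimately show ?thesis using general by blast
qed

end
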